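(* There is an absolute constant $c$ such that for every $h\in A_2(\mathbb R_+,\ell^1)$, $$[h]_{int}\le c\,[h]_{2,\ell^1}\,e^{c[h]_{2,\ell^1}}.$$
   Context: For a nonnegative $f$ and a set $E$ of positive measure, $\langle f\rangle_E=\frac1{|E|}\int_Ef\,dx$; $I_{x,y}=[x,x+y)$. For measurable $h\ge0$ on $\mathbb R_+$, $[h]_{2,\ell^1}=\sum_{n=0}^\infty\big(\langle h\rangle_{I_{n,2}}\langle h^{-1}\rangle_{I_{n,2}}-1\big)$, and $A_2(\mathbb R_+,\ell^1)$ is the class of $h\ge0$ with $[h]_{2,\ell^1}<\infty$. Further, $[h]_{int}=\int_0^\infty(\kappa(s)+\kappa_d(s)-2)\,ds\in[0,\infty]$, where $\kappa(r)=\frac1{h(r)}\int_r^\infty h(s)e^{r-s}ds$ and $\kappa_d(r)=h(r)\int_r^\infty\frac1{h(s)}e^{r-s}ds$. *)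

theory Defs
  imports "HOL-Analysis.Analysis"
begin

definition avg :: "real set \<Rightarrow> (real \<Rightarrow> ennreal) \<Rightarrow> ennreal" where
  "avg E f = (\<integral>\<^sup>+ x\<in>E. f x \<partial>lborel) / emeasure lborel E"

definition Ivl :: "real \<Rightarrow> real \<Rightarrow> real set" where
  "Ivl x y = {x..<x+y}"

text \<open>[h]_{2,l^1} (values in [0,\<infinity>]); h^{-1} is taken in ennreal, so 1/0 = \<infinity>.\<close>
definition A2l1 :: "(real \<Rightarrow> real) \<Rightarrow> ennreal" where
  "A2l1 h = (\<Sum>n. avg (Ivl (real n) 2) (\<lambda>x. ennreal (h x))
                  * avg (Ivl (real n) 2) (\<lambda>x. inverse (ennreal (h x))) - 1)"

definition kappa :: "(real \<Rightarrow> real) \<Rightarrow> real \<Rightarrow> ennreal" where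
  "kappa h r = (\<integral>\<^sup>+ s\<in>{r..}. ennreal (h s * exp (r - s)) \<partial>lborel) / ennreal (h r)"

definition kappa_d :: "(real \<Rightarrow> real) \<Rightarrow> real \<Rightarrow> ennreal" where
  "kappa_d h r = ennreal (h r) *
     (\<integral>\<^sup>+ s\<in>{r..}. inverse (ennreal (h s)) * ennreal (exp (r - s)) \<partial>lborel)"

definition h_int :: "(real \<Rightarrow> real) \<Rightarrow> ennreal" where
  "h_int h = (\<integral>\<^sup>+ s\<in>{0<..}. (kappa h s + kappa_d h s - 2) \<partial>lborel)"

end

theory Submission
  imports Defs
begin

text \<open>
  Cut [0,\<infinity>) into unit cells Q_k with A_k, B_k the integrals of h and 1/h over Q_k; then
  [h]_{2,l^1} is the sum of the eps_k built from adjacent cells, and A_k B_k \<ge> 1.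
  Since the kernel e^{r-s} has unit mass, \<kappa>(r) + \<kappa>_d(r) - 2 is the e^{r-s}-average of
  h(s)/h(r) + h(r)/h(s) - 2 \<ge> 0, whose integral over Q_n \<times> Q_m is
  osc n m = A_m B_n + A_n B_m - 2.  Bounding e^{r-s} by e^{1-d} on the d-th cell to the right
  gives [h]_int \<le> \<Sum>_{n,d} e^{1-d} osc n (n+d).  Adjacent cells give osc n (n+1) \<le> 4 eps_n,
  and because A_m B_m \<ge> 1 one can pass through intermediate cells,
  osc n (m+1) \<le> (2 + osc m (m+1)) osc n m + 2 osc m (m+1), so osc n (n+d) grows at most
  like 2^d times an exponential of the eps-sum; the factor e^{-d} beats 2^d.
\<close>

lemma two_le_add_if_one_le_mult:
  fixes x y :: real
  assumes "0 < x" "0 < y" "1 \<le> x * y"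
  shows "2 \<le> x + y"
proof -
  have "2 ^ 2 \<le> (x + y) ^ 2"
    using zero_le_power2[of "x - y"] assms(3) by (simp add: power2_eq_square algebra_simps)
  thus ?thesis by (rule power2_le_imp_le) (use assms in auto)
qed

lemma one_le_mult:
  fixes x y :: "'a::linordered_semidom"
  shows "1 \<le> x \<Longrightarrow> 1 \<le> y \<Longrightarrow> 1 \<le> x * y"
  by (metis dual_order.trans mult_mono mult_1 zero_le_one)

lemma ennreal_suminf_offset_le: "(\<Sum>n. f (n + j)) \<le> (suminf f :: ennreal)"
  using suminf_offset[of f j] by (simp add: summableI)

lemma ennreal_suminf_Suc_mult_power_le:
  fixes q :: real
  assumes "0 \<le> q" "q \<le> 4 / 5"
  shows "(\<Sum>d. ennreal (real (Suc d) * q ^ d)) \<le> 25"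
proof -
  have "(\<lambda>d. real (Suc d) * q ^ d) sums (1 / (1 - q) ^ 2)"
    using assms by (intro geometric_deriv_sums) auto
  hence "(\<Sum>d. ennreal (real (Suc d) * q ^ d)) = ennreal (1 / (1 - q) ^ 2)"
    using assms by (subst suminf_ennreal2) (auto simp: sums_iff)
  also have "\<dots> \<le> ennreal 25"
  proof (rule ennreal_leI)
    have "(1 / 5) ^ 2 \<le> (1 - q) ^ 2" using assms by (intro power_mono) auto
    thus "1 / (1 - q) ^ 2 \<le> 25" using assms by (simp add: field_simps power2_eq_square)
  qed
  finally show ?thesis by simp
qed

text \<open>A k and B k model the integrals of h and 1/h over the cell [k, k+1); eps k is then the
  k-th summand of [h]_{2,l^1}.\<close>
locale cell_averages =
  fixes A B :: "nat \<Rightarrow> real"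
  assumes A_pos: "\<And>k. 0 < A k" and B_pos: "\<And>k. 0 < B k"
    and one_le_AB: "\<And>k. 1 \<le> A k * B k"
begin

definition eps :: "nat \<Rightarrow> real" where
  "eps k = (A k + A (Suc k)) / 2 * ((B k + B (Suc k)) / 2) - 1"

definition osc :: "nat \<Rightarrow> nat \<Rightarrow> real" where
  "osc n m = A m * B n + A n * B m - 2"

lemma one_le_AB_AB: "1 \<le> (A k * B k) * (A l * B l)"
  by (intro one_le_mult one_le_AB)

lemma osc_nonneg: "0 \<le> osc n m"
proof -
  have "1 \<le> (A m * B n) * (A n * B m)"
    using one_le_AB_AB[of m n] by (simp add: algebra_simps)
  hence "2 \<le> A m * B n + A n * B m"
    by (intro two_le_add_if_one_le_mult) (auto intro!: mult_pos_pos A_pos B_pos)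
  thus ?thesis by (simp add: osc_def)
qed

lemma eps_eq: "4 * eps n = A n * B n + A (Suc n) * B (Suc n) + osc n (Suc n) - 2"
  by (simp add: eps_def osc_def algebra_simps)

lemma eps_nonneg: "0 \<le> eps n"
  using eps_eq[of n] one_le_AB[of n] one_le_AB[of "Suc n"] osc_nonneg[of n "Suc n"] by linarith

lemma osc_diag_le: "osc n n \<le> 8 * eps n"
  using eps_eq[of n] one_le_AB[of "Suc n"] osc_nonneg[of n "Suc n"] by (simp add: osc_def)

lemma osc_Suc_le: "osc n (Suc n) \<le> 4 * eps n"
  using eps_eq[of n] one_le_AB[of n] one_le_AB[of "Suc n"] by linarith

text \<open>Pass through cell m: as A m B m \<ge> 1, A (m+1) B n \<le> (A (m+1) B m) (A m B n), and
  symmetrically with A and B exchanged.\<close>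
lemma osc_step_le: "osc n (Suc m) \<le> (2 + osc m (Suc m)) * osc n m + 2 * osc m (Suc m)"
proof -
  define X where "X = A (Suc m) * B m"
  define Y where "Y = A m * B n"
  define X' where "X' = A m * B (Suc m)"
  define Y' where "Y' = A n * B m"
  have "A (Suc m) * B n * 1 \<le> A (Suc m) * B n * (A m * B m)"
    using one_le_AB[of m] A_pos B_pos by (intro mult_left_mono) (auto intro: less_imp_le)
  hence XY: "A (Suc m) * B n \<le> X * Y" by (simp add: X_def Y_def algebra_simps)
  have "A n * B (Suc m) * 1 \<le> A n * B (Suc m) * (A m * B m)"
    using one_le_AB[of m] A_pos B_pos by (intro mult_left_mono) (auto intro: less_imp_le)
  hence XY': "A n * B (Suc m) \<le> X' * Y'" by (simp add: X'_def Y'_def algebra_simps)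
  have "1 \<le> ((A (Suc m) * B (Suc m)) * (A n * B n)) * ((A m * B m) * (A m * B m))"
    by (intro one_le_mult one_le_AB_AB)
  hence "1 \<le> (X * Y') * (X' * Y)" by (simp add: X_def Y_def X'_def Y'_def algebra_simps)
  hence cross: "2 \<le> X * Y' + X' * Y"
    by (intro two_le_add_if_one_le_mult)
      (auto simp: X_def Y_def X'_def Y'_def intro!: mult_pos_pos A_pos B_pos)
  have "osc n (Suc m) + 2 \<le> X * Y + X' * Y'" using XY XY' by (simp add: osc_def)
  also have "\<dots> = (X + X') * (Y + Y') - (X * Y' + X' * Y)" by (simp add: algebra_simps)
  also have "\<dots> \<le> (osc m (Suc m) + 2) * (osc n m + 2) - 2"
    using cross by (simp add: osc_def X_def Y_def X'_def Y'_def)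
  finally show ?thesis by (simp add: algebra_simps)
qed

lemma osc_far_le:
  "osc n (n + Suc e) \<le> 2 ^ e * (4 * (\<Sum>j\<le>e. eps (n + j))) * exp (4 * (\<Sum>j\<le>e. eps (n + j)))"
proof (induction e)
  case 0
  have "4 * eps n * 1 \<le> 4 * eps n * exp (4 * eps n)"
    by (intro mult_left_mono) (auto simp: eps_nonneg)
  hence "osc n (Suc n) \<le> 4 * eps n * exp (4 * eps n)"
    using osc_Suc_le[of n] by simp
  thus ?case by simp
next
  case (Suc e)
  define S where "S = 4 * (\<Sum>j\<le>e. eps (n + j))"
  define D where "D = 4 * eps (n + Suc e)"
  have S0: "0 \<le> S" unfolding S_def by (intro mult_nonneg_nonneg sum_nonneg) (auto simp: eps_nonneg)
  have D0: "0 \<le> D" by (simp add: D_def eps_nonneg)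
  have SD: "4 * (\<Sum>j\<le>Suc e. eps (n + j)) = S + D" by (simp add: S_def D_def algebra_simps)
  have exp_D: "2 + D \<le> 2 * exp D" using exp_ge_add_one_self[of D] D0 by linarith
  have osc_D: "osc (n + Suc e) (Suc (n + Suc e)) \<le> D"
    unfolding D_def using osc_Suc_le by simp
  have "osc (n + Suc e) (Suc (n + Suc e)) * osc n (n + Suc e) \<le> D * osc n (n + Suc e)"
    using osc_D osc_nonneg by (rule mult_right_mono)
  hence "osc n (n + Suc (Suc e)) \<le> (2 + D) * osc n (n + Suc e) + 2 * D"
    using osc_step_le[of n "n + Suc e"] osc_D by (simp add: algebra_simps)
  also have "\<dots> \<le> (2 * exp D) * (2 ^ e * S * exp S) + 2 ^ Suc e * D * exp (S + D)"
  proof (rule add_mono)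
    show "(2 + D) * osc n (n + Suc e) \<le> (2 * exp D) * (2 ^ e * S * exp S)"
      using Suc.IH exp_D D0 osc_nonneg[of n "n + Suc e"]
      by (intro mult_mono) (auto simp: S_def)
    have "2 * D * 1 \<le> 2 ^ Suc e * D * exp (S + D)"
      using D0 S0 by (intro mult_mono) auto
    thus "2 * D \<le> 2 ^ Suc e * D * exp (S + D)" by simp
  qed
  also have "\<dots> = 2 ^ Suc e * (S + D) * exp (S + D)"
    by (simp add: exp_add algebra_simps)
  finally show ?case by (simp only: SD)
qed

lemma eps_sum_le_suminf:
  assumes "summable eps"
  shows "(\<Sum>j\<le>e. eps (n + j)) \<le> suminf eps"
proof -
  have "(\<Sum>j\<le>e. eps (n + j)) = sum eps {n..n + e}"
    by (simp add: atLeast0AtMost[symmetric] sum.shift_bounds_cl_nat_ivl[symmetric] add.commute)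
  also have "\<dots> \<le> suminf eps"
    using assms by (rule sum_le_suminf) (auto simp: eps_nonneg)
  finally show ?thesis .
qed

lemma weighted_osc_le:
  assumes "summable eps"
  shows "exp (1 - real d) * osc n (n + d)
           \<le> 24 * exp (4 * suminf eps) * (2 / exp 1) ^ d * (\<Sum>j\<le>d. eps (n + j))"
proof (cases d)
  case 0
  have "exp 1 * osc n n \<le> exp 1 * (8 * eps n)"
    using osc_diag_le by (intro mult_left_mono) auto
  also have "\<dots> \<le> 3 * (8 * eps n)"
    using exp_le eps_nonneg[of n] by (intro mult_right_mono) auto
  also have "\<dots> = 24 * 1 * eps n" by simp
  also have "\<dots> \<le> 24 * exp (4 * suminf eps) * eps n"
    using assms eps_nonneg[of n] by (intro mult_right_mono mult_left_mono) (auto intro!: suminf_nonneg eps_nonneg)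
  finally show ?thesis using 0 by simp
next
  case (Suc e)
  define S where "S = (\<Sum>j\<le>e. eps (n + j))"
  define q :: real where "q = 2 / exp 1"
  have S0: "0 \<le> S" unfolding S_def by (intro sum_nonneg) (simp add: eps_nonneg)
  have SE: "S \<le> suminf eps" unfolding S_def using assms by (rule eps_sum_le_suminf)
  have q_pow: "exp (- real e) * 2 ^ e = q ^ e"
    by (simp add: q_def power_divide exp_of_nat_mult[symmetric] exp_minus field_simps)
  have q_ge: "2 / 3 \<le> q"
    unfolding q_def using exp_le by (intro divide_left_mono) auto
  have "exp (1 - real d) * osc n (n + d) = exp (- real e) * osc n (n + Suc e)"
    by (simp add: Suc)
  also have "\<dots> \<le> exp (- real e) * (2 ^ e * (4 * S) * exp (4 * S))"
    unfolding S_def by (intro mult_left_mono osc_far_le) simp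
  also have "\<dots> \<le> exp (- real e) * (2 ^ e * (4 * S) * exp (4 * suminf eps))"
    using SE S0 by (intro mult_left_mono) auto
  also have "\<dots> = q ^ e * (4 * S * exp (4 * suminf eps))"
    by (simp only: q_pow[symmetric] mult_ac)
  also have "\<dots> \<le> (3 / 2 * q ^ d) * (4 * S * exp (4 * suminf eps))"
  proof (rule mult_right_mono)
    have "1 * q ^ e \<le> (3 / 2 * q) * q ^ e"
      using q_ge by (intro mult_right_mono) auto
    thus "q ^ e \<le> 3 / 2 * q ^ d" by (simp add: Suc mult_ac)
  qed (use S0 in auto)
  also have "\<dots> = 6 * exp (4 * suminf eps) * q ^ d * S" by simp
  also have "\<dots> \<le> 6 * exp (4 * suminf eps) * q ^ d * (\<Sum>j\<le>d. eps (n + j))"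
    unfolding S_def Suc by (intro mult_left_mono sum_mono2) (auto simp: eps_nonneg q_def)
  also have "\<dots> \<le> 24 * exp (4 * suminf eps) * q ^ d * (\<Sum>j\<le>d. eps (n + j))"
    by (intro mult_right_mono sum_nonneg) (auto simp: eps_nonneg q_def)
  finally show ?thesis by (simp add: q_def)
qed

lemma weighted_osc_suminf_le:
  assumes "summable eps"
  shows "(\<Sum>d. \<Sum>n. ennreal (exp (1 - real d) * osc n (n + d)))
           \<le> ennreal (600 * suminf eps * exp (4 * suminf eps))"
proof -
  define E where "E = suminf eps"
  define K where "K = 24 * exp (4 * E)"
  define q :: real where "q = 2 / exp 1"
  have E0: "0 \<le> E" unfolding E_def using assms by (auto intro!: suminf_nonneg eps_nonneg)
  have K0: "0 \<le> K" by (simp add: K_def)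
  have q_bounds: "0 \<le> q" "q \<le> 4 / 5"
    using exp_lower_Taylor_quadratic[of 1] by (auto simp: q_def field_simps)
  have tail_le: "(\<Sum>n. ennreal (eps (n + j))) \<le> ennreal E" for j
    using ennreal_suminf_offset_le[of "\<lambda>n. ennreal (eps n)" j] assms
    by (simp add: E_def suminf_ennreal2 eps_nonneg)
  have "(\<Sum>d. \<Sum>n. ennreal (exp (1 - real d) * osc n (n + d)))
      \<le> (\<Sum>d. \<Sum>n. ennreal (K * q ^ d) * (\<Sum>j\<le>d. ennreal (eps (n + j))))"
  proof (intro suminf_le summableI)
    fix d n
    have "ennreal (exp (1 - real d) * osc n (n + d)) \<le> ennreal (K * q ^ d * (\<Sum>j\<le>d. eps (n + j)))"
      unfolding K_def q_def E_def using assms by (intro ennreal_leI weighted_osc_le)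
    also have "\<dots> = ennreal (K * q ^ d) * (\<Sum>j\<le>d. ennreal (eps (n + j)))"
      using K0 q_bounds by (simp add: ennreal_mult' sum_ennreal eps_nonneg)
    finally show "ennreal (exp (1 - real d) * osc n (n + d))
        \<le> ennreal (K * q ^ d) * (\<Sum>j\<le>d. ennreal (eps (n + j)))" .
  qed
  also have "\<dots> = (\<Sum>d. ennreal (K * q ^ d) * (\<Sum>j\<le>d. \<Sum>n. ennreal (eps (n + j))))"
    by (simp add: suminf_sum summableI)
  also have "\<dots> \<le> (\<Sum>d. ennreal (K * q ^ d) * (\<Sum>j\<le>d. ennreal E))"
    by (intro suminf_le summableI mult_left_mono sum_mono tail_le) auto
  also have "\<dots> = ennreal (K * E) * (\<Sum>d. ennreal (real (Suc d) * q ^ d))"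
  proof -
    have "ennreal (K * q ^ d) * (\<Sum>j\<le>d. ennreal E) = ennreal (K * E) * ennreal (real (Suc d) * q ^ d)" for d
      using K0 q_bounds E0
      by (simp add: ennreal_mult[symmetric] ennreal_of_nat_eq_real_of_nat)
        (simp add: algebra_simps ennreal_mult[symmetric])
    thus ?thesis by (simp add: ennreal_suminf_cmult)
  qed
  also have "\<dots> \<le> ennreal (K * E) * 25"
    using q_bounds by (intro mult_left_mono ennreal_suminf_Suc_mult_power_le) auto
  also have "\<dots> = ennreal (K * E * 25)"
    using K0 E0 by (simp add: ennreal_mult'')
  also have "\<dots> = ennreal (600 * E * exp (4 * E))"
    by (simp add: K_def mult_ac)
  finally show ?thesis unfolding E_def .
qed

end

lemma set_nn_integral_add_minus_2:
  fixes u v :: "real \<Rightarrow> real"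
  assumes S: "S \<in> sets lborel" "emeasure lborel S = 1"
    and [measurable]: "u \<in> borel_measurable lborel" "v \<in> borel_measurable lborel"
    and nonneg: "\<And>x. 0 \<le> u x" "\<And>x. 0 \<le> v x"
    and two_le: "AE x in lborel. x \<in> S \<longrightarrow> 2 \<le> u x + v x"
    and U: "(\<integral>\<^sup>+x\<in>S. ennreal (u x) \<partial>lborel) = ennreal U"
    and V: "(\<integral>\<^sup>+x\<in>S. ennreal (v x) \<partial>lborel) = ennreal V"
    and "0 \<le> U" "0 \<le> V"
  shows "(\<integral>\<^sup>+x\<in>S. ennreal (u x + v x - 2) \<partial>lborel) = ennreal (U + V - 2)"
proof -
  have minus_2: "ennreal t - 2 = ennreal (t - 2)" for t :: real
    using ennreal_minus[of 2 t] by simp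
  have "(\<integral>\<^sup>+x\<in>S. ennreal (u x + v x - 2) \<partial>lborel)
      = (\<integral>\<^sup>+x. ennreal (u x + v x) * indicator S x - 2 * indicator S x \<partial>lborel)"
    using two_le by (intro nn_integral_cong_AE) (auto simp: indicator_def minus_2)
  also have "\<dots> = (\<integral>\<^sup>+x\<in>S. ennreal (u x + v x) \<partial>lborel) - (\<integral>\<^sup>+x. 2 * indicator S x \<partial>lborel)"
  proof (rule nn_integral_diff)
    show "(\<integral>\<^sup>+x. 2 * indicator S x \<partial>lborel) \<noteq> \<infinity>"
      using S by (simp add: nn_integral_cmult_indicator)
    show "AE x in lborel. 2 * indicator S x \<le> ennreal (u x + v x) * (indicator S x :: ennreal)"
      using two_le by eventually_elim (auto simp: indicator_def)
  qed (use S in auto)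
  also have "(\<integral>\<^sup>+x\<in>S. ennreal (u x + v x) \<partial>lborel)
      = (\<integral>\<^sup>+x. ennreal (u x) * indicator S x + ennreal (v x) * indicator S x \<partial>lborel)"
    using nonneg by (intro nn_integral_cong) (simp add: ennreal_plus distrib_right)
  also have "\<dots> = ennreal (U + V)"
    using U V S \<open>0 \<le> U\<close> \<open>0 \<le> V\<close> by (subst nn_integral_add) (auto simp: ennreal_plus)
  also have "(\<integral>\<^sup>+x. 2 * indicator S x \<partial>lborel) = 2"
    using S by (simp add: nn_integral_cmult_indicator)
  finally show ?thesis by (simp add: minus_2)
qed

lemma nn_integral_exp_atLeast:
  assumes "0 \<le> c"
  shows "(\<integral>\<^sup>+s\<in>{r..}. ennreal (c * exp (r - s)) \<partial>lborel) = ennreal c"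
proof -
  have "(\<integral>\<^sup>+s\<in>{r..}. ennreal (c * exp (r - s)) \<partial>lborel) = ennreal (0 - (- c * exp (r - r)))"
  proof (rule nn_integral_FTC_atLeast[where F="\<lambda>s. - c * exp (r - s)"])
    show "(\<lambda>s. c * exp (r - s)) \<in> borel_measurable borel" by measurable
    show "((\<lambda>s. - c * exp (r - s)) has_real_derivative c * exp (r - x)) (at x)" for x
      by (auto intro!: derivative_eq_intros)
    show "((\<lambda>s. - c * exp (r - s)) \<longlongrightarrow> 0) at_top"
      by real_asymp
  qed (use assms in auto)
  thus ?thesis by simp
qed

lemma ennreal_half_mult_minus_1_less_top_iff:
  "(x / 2 * (y / 2) - 1 < (\<infinity>::ennreal)) \<longleftrightarrow> x * y < \<infinity>"
  by (simp add: less_top[symmetric] ennreal_mult_eq_top_iff ennreal_divide_eq_top_iff)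

lemma ennreal_mult_add_split_2:
  fixes a b c :: real
  assumes "0 \<le> a" "0 \<le> b" "0 \<le> c" "2 \<le> a + b"
  shows "ennreal (c * a) + ennreal (c * b) = ennreal (c * (a + b - 2)) + ennreal (2 * c)"
proof -
  have "ennreal (c * a) + ennreal (c * b) = ennreal (c * (a + b - 2) + 2 * c)"
    using assms by (simp add: ennreal_plus[symmetric] algebra_simps del: ennreal_plus)
  also have "\<dots> = ennreal (c * (a + b - 2)) + ennreal (2 * c)"
    using assms by (intro ennreal_plus) auto
  finally show ?thesis .
qed

definition unit_cell :: "nat \<Rightarrow> real set" where
  "unit_cell k = {real k..<real k + 1}"

lemma sets_unit_cell [measurable]: "unit_cell k \<in> sets borel"
  by (simp add: unit_cell_def)

lemma emeasure_unit_cell [simp]: "emeasure lborel (unit_cell k) = 1"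
  by (simp add: unit_cell_def)

lemma mem_unit_cell_floor: "0 \<le> x \<Longrightarrow> x \<in> unit_cell (nat \<lfloor>x\<rfloor>)"
  by (auto simp: unit_cell_def)

lemma exp_kernel_le_cell_weights:
  assumes "0 \<le> r" "r \<le> s"
  shows "ennreal (exp (r - s) * t)
           \<le> (\<Sum>d. ennreal (exp (1 - real d)) * (ennreal t * indicator (unit_cell (nat \<lfloor>r\<rfloor> + d)) s))"
proof -
  define d where "d = nat \<lfloor>s\<rfloor> - nat \<lfloor>r\<rfloor>"
  have "nat \<lfloor>r\<rfloor> + d = nat \<lfloor>s\<rfloor>"
    using floor_mono[OF assms(2)] assms(1) unfolding d_def by linarith
  hence s_cell: "s \<in> unit_cell (nat \<lfloor>r\<rfloor> + d)" using mem_unit_cell_floor[of s] assms by simp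
  hence "r - s \<le> 1 - real d"
    using assms by (simp add: unit_cell_def) linarith
  have "ennreal (exp (r - s) * t) \<le> ennreal (exp (1 - real d) * t)"
  proof (cases "0 \<le> t")
    case True
    thus ?thesis using \<open>r - s \<le> 1 - real d\<close> by (intro ennreal_leI mult_right_mono) auto
  next
    case False
    hence "exp (r - s) * t \<le> 0" by (simp add: mult_nonneg_nonpos)
    thus ?thesis by (simp add: ennreal_neg)
  qed
  also have "\<dots> = ennreal (exp (1 - real d)) * (ennreal t * indicator (unit_cell (nat \<lfloor>r\<rfloor> + d)) s)"
    using s_cell by (simp add: ennreal_mult')
  also have "\<dots> \<le> (\<Sum>d. ennreal (exp (1 - real d)) * (ennreal t * indicator (unit_cell (nat \<lfloor>r\<rfloor> + d)) s))"
    by (rule sum_le_suminf[of _ "{d}", simplified]) (auto simp: summableI)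
  finally show ?thesis .
qed

lemma avg_Ivl_2_eq:
  assumes [measurable]: "f \<in> borel_measurable borel"
  shows "avg (Ivl (real n) 2) f
           = ((\<integral>\<^sup>+x\<in>unit_cell n. f x \<partial>lborel) + (\<integral>\<^sup>+x\<in>unit_cell (Suc n). f x \<partial>lborel)) / 2"
proof -
  have "indicator (Ivl (real n) 2) x = (indicator (unit_cell n) x + indicator (unit_cell (Suc n)) x :: ennreal)" for x
    by (auto simp: Ivl_def unit_cell_def indicator_def)
  hence "(\<integral>\<^sup>+x\<in>Ivl (real n) 2. f x \<partial>lborel)
      = (\<integral>\<^sup>+x. f x * indicator (unit_cell n) x + f x * indicator (unit_cell (Suc n)) x \<partial>lborel)"
    by (simp add: distrib_left)
  also have "\<dots> = (\<integral>\<^sup>+x\<in>unit_cell n. f x \<partial>lborel) + (\<integral>\<^sup>+x\<in>unit_cell (Suc n). f x \<partial>lborel)"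
    by (intro nn_integral_add) auto
  finally show ?thesis by (simp add: avg_def Ivl_def)
qed

definition cell_int :: "(real \<Rightarrow> real) \<Rightarrow> nat \<Rightarrow> ennreal" where
  "cell_int h k = (\<integral>\<^sup>+x\<in>unit_cell k. ennreal (h x) \<partial>lborel)"

definition cell_int_inv :: "(real \<Rightarrow> real) \<Rightarrow> nat \<Rightarrow> ennreal" where
  "cell_int_inv h k = (\<integral>\<^sup>+x\<in>unit_cell k. inverse (ennreal (h x)) \<partial>lborel)"

lemma A2l1_eq_cell_int:
  assumes [measurable]: "h \<in> borel_measurable borel"
  shows "A2l1 h = (\<Sum>n. (cell_int h n + cell_int h (Suc n)) / 2
                        * ((cell_int_inv h n + cell_int_inv h (Suc n)) / 2) - 1)"
  unfolding A2l1_def cell_int_def cell_int_inv_def by (subst avg_Ivl_2_eq, measurable)+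

locale A2_weight =
  fixes h :: "real \<Rightarrow> real"
  assumes measurable_h [measurable]: "h \<in> borel_measurable borel"
    and nonneg: "\<And>x. 0 \<le> h x"
    and A2_finite: "A2l1 h < \<infinity>"
begin

lemma cell_int_inv_neq_0: "cell_int_inv h k \<noteq> 0"
proof
  assume "cell_int_inv h k = 0"
  hence "AE x in lborel. inverse (ennreal (h x)) * indicator (unit_cell k) x = 0"
    unfolding cell_int_inv_def by (subst nn_integral_0_iff_AE[symmetric]) auto
  hence "AE x in lborel. x \<notin> unit_cell k"
    by eventually_elim (auto simp: indicator_def)
  hence "emeasure lborel (unit_cell k) = 0"
    by (subst (asm) AE_iff_measurable[of "unit_cell k"]) auto
  thus False by simp
qed

lemma AE_cell_zero_if_cell_int_0:
  assumes "cell_int h k = 0"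
  shows "AE x in lborel. x \<in> unit_cell k \<longrightarrow> h x = 0"
proof -
  have "AE x in lborel. ennreal (h x) * indicator (unit_cell k) x = 0"
    using assms unfolding cell_int_def by (subst nn_integral_0_iff_AE[symmetric]) auto
  thus ?thesis by eventually_elim (use nonneg in \<open>auto simp: indicator_def\<close>)
qed

lemma cell_int_inv_top_if_cell_int_0:
  assumes "cell_int h k = 0"
  shows "cell_int_inv h k = \<infinity>"
proof -
  have "cell_int_inv h k = (\<integral>\<^sup>+x. \<infinity> * indicator (unit_cell k) x \<partial>lborel)"
    unfolding cell_int_inv_def using AE_cell_zero_if_cell_int_0[OF assms]
    by (intro nn_integral_cong_AE) (auto simp: indicator_def)
  also have "\<dots> = \<infinity>" by (simp add: nn_integral_cmult_indicator)
  finally show ?thesis .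
qed

lemma cell_int_mult_less_top:
  "(cell_int h n + cell_int h (Suc n)) * (cell_int_inv h n + cell_int_inv h (Suc n)) < \<infinity>"
proof -
  have "(cell_int h n + cell_int h (Suc n)) / 2 * ((cell_int_inv h n + cell_int_inv h (Suc n)) / 2) - 1 < \<infinity>"
    using A2_finite unfolding A2l1_eq_cell_int[OF measurable_h] by (rule ennreal_suminf_lessD)
  thus ?thesis by (simp only: ennreal_half_mult_minus_1_less_top_iff)
qed

lemma cell_int_neq_top: "cell_int h k \<noteq> \<infinity>"
  using cell_int_mult_less_top[of k] cell_int_inv_neq_0[of k]
  by (auto simp: ennreal_mult_less_top)

lemma cell_int_inv_top_iff: "cell_int_inv h k = \<infinity> \<longleftrightarrow> cell_int_inv h 0 = \<infinity>"
proof (induction k)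
  case (Suc k)
  have "cell_int h k = 0 \<and> cell_int h (Suc k) = 0"
    if "cell_int_inv h k = \<infinity> \<or> cell_int_inv h (Suc k) = \<infinity>"
    using cell_int_mult_less_top[of k] that by (auto simp: ennreal_mult_less_top)
  thus ?case using Suc cell_int_inv_top_if_cell_int_0 by blast
qed simp

lemma kappa_eq_set_nn_integral:
  assumes hr: "0 < h r"
  shows "kappa h r = (\<integral>\<^sup>+s\<in>{r..}. ennreal (exp (r - s) * (1 / h r * h s)) \<partial>lborel)"
proof -
  have "kappa h r = (\<integral>\<^sup>+s. ennreal (h s * exp (r - s)) * indicator {r..} s * ennreal (1 / h r) \<partial>lborel)"
    unfolding kappa_def divide_ennreal_def using hr
    by (subst nn_integral_multc) (auto simp: inverse_ennreal divide_inverse)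
  also have "\<dots> = (\<integral>\<^sup>+s\<in>{r..}. ennreal (exp (r - s) * (1 / h r * h s)) \<partial>lborel)"
    using hr nonneg by (intro nn_integral_cong) (simp add: ennreal_mult'[symmetric] mult_ac)
  finally show ?thesis .
qed

text \<open>Here h vanishes a.e. on [0,\<infinity>); kappa and kappa_d then vanish only through the ennreal
  conventions 0 / 0 = 0 and 0 * \<infinity> = 0.\<close>
lemma h_int_eq_0_if_degenerate:
  assumes "cell_int_inv h 0 = \<infinity>"
  shows "h_int h = 0"
proof -
  have "cell_int h k = 0" for k
    using cell_int_mult_less_top[of k] assms cell_int_inv_top_iff[of k]
    by (auto simp: ennreal_mult_less_top)
  hence "AE x in lborel. \<forall>k. x \<in> unit_cell k \<longrightarrow> h x = 0"
    by (subst AE_all_countable) (auto intro: AE_cell_zero_if_cell_int_0)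
  hence zero: "AE x in lborel. 0 \<le> x \<longrightarrow> h x = 0"
    by eventually_elim (use mem_unit_cell_floor in blast)
  have "AE r in lborel. (kappa h r + kappa_d h r - 2) * indicator {0<..} r = 0"
    using zero
  proof eventually_elim
    case (elim r)
    show ?case
    proof (cases "0 < r")
      case True
      have "(\<integral>\<^sup>+s\<in>{r..}. ennreal (h s * exp (r - s)) \<partial>lborel) = (\<integral>\<^sup>+(s::real). 0 \<partial>lborel)"
        using zero True by (intro nn_integral_cong_AE) (auto simp: indicator_def)
      thus ?thesis using elim True by (simp add: kappa_def kappa_d_def)
    qed simp
  qed
  hence "h_int h = (\<integral>\<^sup>+(r::real). 0 \<partial>lborel)"
    unfolding h_int_def by (rule nn_integral_cong_AE)
  thus ?thesis by simp
qed

end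

definition cell_mean :: "(real \<Rightarrow> real) \<Rightarrow> nat \<Rightarrow> real" where
  "cell_mean h k = enn2real (cell_int h k)"

definition cell_mean_inv :: "(real \<Rightarrow> real) \<Rightarrow> nat \<Rightarrow> real" where
  "cell_mean_inv h k = enn2real (cell_int_inv h k)"

locale nondegenerate_A2_weight = A2_weight +
  assumes cell_int_inv_0_neq_top: "cell_int_inv h 0 \<noteq> \<infinity>"
begin

lemma cell_int_inv_neq_top: "cell_int_inv h k \<noteq> \<infinity>"
  using cell_int_inv_top_iff cell_int_inv_0_neq_top by blast

lemma AE_pos_on_cell: "AE x in lborel. x \<in> unit_cell k \<longrightarrow> 0 < h x"
proof -
  have "AE x in lborel. inverse (ennreal (h x)) * indicator (unit_cell k) x \<noteq> \<infinity>"
    using cell_int_inv_neq_top[of k] unfolding cell_int_inv_def by (intro nn_integral_PInf_AE) auto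
  thus ?thesis by eventually_elim (use nonneg in \<open>auto simp: indicator_def less_le\<close>)
qed

lemma AE_pos: "AE x in lborel. 0 \<le> x \<longrightarrow> 0 < h x"
proof -
  have "AE x in lborel. \<forall>k. x \<in> unit_cell k \<longrightarrow> 0 < h x"
    using AE_pos_on_cell by (subst AE_all_countable) auto
  thus ?thesis by eventually_elim (use mem_unit_cell_floor in blast)
qed

lemma cell_int_eq: "cell_int h k = ennreal (cell_mean h k)"
  using cell_int_neq_top by (simp add: cell_mean_def less_top)

lemma cell_int_inv_eq: "cell_int_inv h k = ennreal (cell_mean_inv h k)"
  using cell_int_inv_neq_top by (simp add: cell_mean_inv_def less_top)

lemma cell_mean_pos: "0 < cell_mean h k"
  using cell_int_neq_top[of k] cell_int_inv_neq_top[of k] cell_int_inv_top_if_cell_int_0[of k]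
  by (auto simp: cell_mean_def enn2real_positive_iff less_top zero_less_iff_neq_zero)

lemma cell_mean_inv_pos: "0 < cell_mean_inv h k"
  using cell_int_inv_neq_top[of k] cell_int_inv_neq_0[of k]
  by (auto simp: cell_mean_inv_def enn2real_positive_iff less_top zero_less_iff_neq_zero)

lemma set_nn_integral_cmult_cell:
  assumes "0 \<le> c"
  shows "(\<integral>\<^sup>+x\<in>unit_cell k. ennreal (c * h x) \<partial>lborel) = ennreal (c * cell_mean h k)"
proof -
  have "(\<integral>\<^sup>+x\<in>unit_cell k. ennreal (c * h x) \<partial>lborel)
      = (\<integral>\<^sup>+x. ennreal c * (ennreal (h x) * indicator (unit_cell k) x) \<partial>lborel)"
    using assms by (intro nn_integral_cong) (simp add: ennreal_mult' mult.assoc)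
  also have "\<dots> = ennreal (c * cell_mean h k)"
    using assms by (simp add: nn_integral_cmult cell_int_def[symmetric] cell_int_eq ennreal_mult')
  finally show ?thesis .
qed

lemma set_nn_integral_divide_cell:
  assumes "0 \<le> c"
  shows "(\<integral>\<^sup>+x\<in>unit_cell k. ennreal (c / h x) \<partial>lborel) = ennreal (c * cell_mean_inv h k)"
proof -
  have "(\<integral>\<^sup>+x\<in>unit_cell k. ennreal (c / h x) \<partial>lborel)
      = (\<integral>\<^sup>+x. ennreal c * (inverse (ennreal (h x)) * indicator (unit_cell k) x) \<partial>lborel)"
    using AE_pos_on_cell[of k] assms
    by (intro nn_integral_cong_AE) (auto simp: indicator_def inverse_ennreal divide_inverse ennreal_mult')
  also have "\<dots> = ennreal (c * cell_mean_inv h k)"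
    using assms by (simp add: nn_integral_cmult cell_int_inv_def[symmetric] cell_int_inv_eq ennreal_mult')
  finally show ?thesis .
qed

text \<open>Cauchy--Schwarz on a unit cell: integrate 2 l \<le> h + l^2 / h and take l = 1 / B.\<close>
lemma one_le_cell_mean_mult: "1 \<le> cell_mean h k * cell_mean_inv h k"
proof -
  define A where "A = cell_mean h k"
  define B where "B = cell_mean_inv h k"
  define l where "l = 1 / B"
  have A: "0 < A" and B: "0 < B" unfolding A_def B_def by (simp_all add: cell_mean_pos cell_mean_inv_pos)
  hence l: "0 < l" by (simp add: l_def)
  have "ennreal (2 * l) = (\<integral>\<^sup>+x\<in>unit_cell k. ennreal (2 * l) \<partial>lborel)"
    by (simp add: nn_integral_cmult_indicator)
  also have "\<dots> \<le> (\<integral>\<^sup>+x\<in>unit_cell k. ennreal (h x) + ennreal (l\<^sup>2) * inverse (ennreal (h x)) \<partial>lborel)"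
  proof (intro nn_integral_mono_AE, use AE_pos_on_cell[of k] in eventually_elim)
    case (elim x)
    have "2 * l * h x \<le> h x * h x + l\<^sup>2" if "0 < h x"
      using zero_le_power2[of "h x - l"] by (simp add: power2_eq_square algebra_simps)
    hence "0 < h x \<Longrightarrow> ennreal (2 * l) \<le> ennreal (h x + l\<^sup>2 / h x)"
      by (intro ennreal_leI) (simp add: field_simps)
    thus ?case using elim
      by (auto simp: indicator_def inverse_ennreal ennreal_plus ennreal_mult' divide_inverse)
  qed
  also have "\<dots> = (\<integral>\<^sup>+x. ennreal (h x) * indicator (unit_cell k) x
      + ennreal (l\<^sup>2) * (inverse (ennreal (h x)) * indicator (unit_cell k) x) \<partial>lborel)"
    by (intro nn_integral_cong) (simp add: distrib_right mult.assoc)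
  also have "\<dots> = cell_int h k + ennreal (l\<^sup>2) * cell_int_inv h k"
    unfolding cell_int_def cell_int_inv_def by (subst nn_integral_add) (auto simp: nn_integral_cmult)
  also have "\<dots> = ennreal (A + l\<^sup>2 * B)"
    using A B by (simp add: A_def B_def cell_int_eq cell_int_inv_eq ennreal_mult' ennreal_plus)
  finally have "2 * l \<le> A + l\<^sup>2 * B"
    using A B by (subst (asm) ennreal_le_iff) auto
  thus ?thesis using B by (simp add: A_def[symmetric] B_def[symmetric] l_def power2_eq_square field_simps)
qed

lemma set_nn_integral_cell_affine:
  assumes "0 < \<alpha>" "0 < \<beta>" "1 \<le> \<alpha> * \<beta>"
  shows "(\<integral>\<^sup>+x\<in>unit_cell k. ennreal (\<alpha> * h x + \<beta> / h x - 2) \<partial>lborel)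
           = ennreal (\<alpha> * cell_mean h k + \<beta> * cell_mean_inv h k - 2)"
proof (rule set_nn_integral_add_minus_2)
  show "AE x in lborel. x \<in> unit_cell k \<longrightarrow> 2 \<le> \<alpha> * h x + \<beta> / h x"
    using AE_pos_on_cell[of k]
  proof eventually_elim
    case (elim x)
    show ?case
    proof
      assume "x \<in> unit_cell k"
      hence "0 < h x" using elim by blast
      thus "2 \<le> \<alpha> * h x + \<beta> / h x"
        using assms by (intro two_le_add_if_one_le_mult) auto
    qed
  qed
qed (use assms nonneg cell_mean_pos cell_mean_inv_pos in
      \<open>auto simp: set_nn_integral_cmult_cell set_nn_integral_divide_cell less_imp_le\<close>)

sublocale cell_averages "cell_mean h" "cell_mean_inv h"
  by unfold_locales (auto intro: cell_mean_pos cell_mean_inv_pos one_le_cell_mean_mult)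

lemma A2l1_eq_suminf_eps: "A2l1 h = (\<Sum>n. ennreal (eps n))"
proof -
  have half: "ennreal x / 2 = ennreal (x / 2)" if "0 \<le> x" for x
    using divide_ennreal[of x 2] that by simp
  have "(cell_int h n + cell_int h (Suc n)) / 2 * ((cell_int_inv h n + cell_int_inv h (Suc n)) / 2) - 1
      = ennreal (eps n + 1) - ennreal 1" for n
    using cell_mean_pos[of n] cell_mean_pos[of "Suc n"] cell_mean_inv_pos[of n] cell_mean_inv_pos[of "Suc n"]
    by (simp add: cell_int_eq cell_int_inv_eq eps_def half ennreal_plus[symmetric]
        ennreal_mult[symmetric] del: ennreal_plus)
  thus ?thesis using eps_nonneg by (simp add: A2l1_eq_cell_int ennreal_minus)
qed

lemma summable_eps: "summable eps"
  using A2_finite by (intro summable_suminf_not_top) (auto simp: eps_nonneg A2l1_eq_suminf_eps)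

lemma kappa_d_eq_set_nn_integral:
  assumes r: "0 < r" and hr: "0 < h r"
  shows "kappa_d h r = (\<integral>\<^sup>+s\<in>{r..}. ennreal (exp (r - s) * (h r / h s)) \<partial>lborel)"
proof -
  have "kappa_d h r = (\<integral>\<^sup>+s. ennreal (h r) * (inverse (ennreal (h s)) * ennreal (exp (r - s)) * indicator {r..} s) \<partial>lborel)"
    unfolding kappa_d_def by (subst nn_integral_cmult) auto
  also have "\<dots> = (\<integral>\<^sup>+s\<in>{r..}. ennreal (exp (r - s) * (h r / h s)) \<partial>lborel)"
    using AE_pos
    by (intro nn_integral_cong_AE, eventually_elim) (use r hr in
        \<open>auto simp: indicator_def inverse_ennreal ennreal_mult'[symmetric] divide_inverse mult_ac\<close>)
  finally show ?thesis .
qed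

lemma kappa_add_kappa_d_minus_2_eq:
  assumes r: "0 < r" and hr: "0 < h r"
  shows "kappa h r + kappa_d h r - 2
           = (\<integral>\<^sup>+s\<in>{r..}. ennreal (exp (r - s) * (1 / h r * h s + h r / h s - 2)) \<partial>lborel)"
    (is "_ = (\<integral>\<^sup>+s\<in>{r..}. ennreal (exp (r - s) * ?\<Phi> s) \<partial>lborel)")
proof -
  have "kappa h r + kappa_d h r = (\<integral>\<^sup>+s. ennreal (exp (r - s) * (1 / h r * h s)) * indicator {r..} s
         + ennreal (exp (r - s) * (h r / h s)) * indicator {r..} s \<partial>lborel)"
    unfolding kappa_eq_set_nn_integral[OF hr] kappa_d_eq_set_nn_integral[OF r hr]
    by (subst nn_integral_add) auto
  also have "\<dots> = (\<integral>\<^sup>+s. ennreal (exp (r - s) * ?\<Phi> s) * indicator {r..} s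
         + ennreal (2 * exp (r - s)) * indicator {r..} s \<partial>lborel)"
    using AE_pos
  proof (intro nn_integral_cong_AE, eventually_elim)
    case (elim s)
    show ?case
    proof (cases "r \<le> s")
      case True
      hence hs: "0 < h s" using elim r by auto
      hence "2 \<le> 1 / h r * h s + h r / h s"
        using hr by (intro two_le_add_if_one_le_mult) auto
      hence "ennreal (exp (r - s) * (1 / h r * h s)) + ennreal (exp (r - s) * (h r / h s))
          = ennreal (exp (r - s) * ?\<Phi> s) + ennreal (2 * exp (r - s))"
        using hr hs by (intro ennreal_mult_add_split_2) auto
      thus ?thesis using True by simp
    qed simp
  qed
  also have "\<dots> = (\<integral>\<^sup>+s\<in>{r..}. ennreal (exp (r - s) * ?\<Phi> s) \<partial>lborel) + 2"
    by (subst nn_integral_add) (auto simp: nn_integral_exp_atLeast)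
  finally show ?thesis by simp
qed

lemma kappa_add_kappa_d_minus_2_le:
  assumes r: "0 < r" and hr: "0 < h r"
  defines "n \<equiv> nat \<lfloor>r\<rfloor>"
  shows "kappa h r + kappa_d h r - 2
           \<le> (\<Sum>d. ennreal (exp (1 - real d))
                  * ennreal (cell_mean_inv h (n + d) * h r + cell_mean h (n + d) / h r - 2))"
proof -
  define \<Phi> where "\<Phi> s = 1 / h r * h s + h r / h s - 2" for s
  have "kappa h r + kappa_d h r - 2 = (\<integral>\<^sup>+s\<in>{r..}. ennreal (exp (r - s) * \<Phi> s) \<partial>lborel)"
    unfolding \<Phi>_def using r hr by (rule kappa_add_kappa_d_minus_2_eq)
  also have "\<dots> \<le> (\<integral>\<^sup>+s. (\<Sum>d. ennreal (exp (1 - real d)) * (ennreal (\<Phi> s) * indicator (unit_cell (n + d)) s)) \<partial>lborel)"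
  proof (intro nn_integral_mono)
    fix s
    show "ennreal (exp (r - s) * \<Phi> s) * indicator {r..} s
        \<le> (\<Sum>d. ennreal (exp (1 - real d)) * (ennreal (\<Phi> s) * indicator (unit_cell (n + d)) s))"
      using exp_kernel_le_cell_weights[of r s "\<Phi> s"] r unfolding n_def by (cases "r \<le> s") auto
  qed
  also have "\<dots> = (\<Sum>d. ennreal (exp (1 - real d)) * (\<integral>\<^sup>+s\<in>unit_cell (n + d). ennreal (\<Phi> s) \<partial>lborel))"
    unfolding \<Phi>_def by (subst nn_integral_suminf) (auto simp: nn_integral_cmult)
  also have "\<dots> = (\<Sum>d. ennreal (exp (1 - real d))
                  * ennreal (cell_mean_inv h (n + d) * h r + cell_mean h (n + d) / h r - 2))"
  proof -
    have "(\<integral>\<^sup>+s\<in>unit_cell m. ennreal (\<Phi> s) \<partial>lborel)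
        = ennreal (1 / h r * cell_mean h m + h r * cell_mean_inv h m - 2)" for m
      unfolding \<Phi>_def using hr by (intro set_nn_integral_cell_affine) auto
    also have "\<dots> m = ennreal (cell_mean_inv h m * h r + cell_mean h m / h r - 2)" for m
      by (simp add: algebra_simps)
    finally show ?thesis by simp
  qed
  finally show ?thesis .
qed

lemma h_int_le_weighted_osc: "h_int h \<le> (\<Sum>d. \<Sum>n. ennreal (exp (1 - real d) * osc n (n + d)))"
proof -
  define G where "G d n r = ennreal (exp (1 - real d))
    * (ennreal (cell_mean_inv h (n + d) * h r + cell_mean h (n + d) / h r - 2) * indicator (unit_cell n) r)"
    for d n r
  have "h_int h \<le> (\<integral>\<^sup>+r. (\<Sum>d. \<Sum>n. G d n r) \<partial>lborel)"
    unfolding h_int_def using AE_pos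
  proof (intro nn_integral_mono_AE, eventually_elim)
    case (elim r)
    show ?case
    proof (cases "0 < r")
      case True
      hence hr: "0 < h r" using elim by auto
      have "kappa h r + kappa_d h r - 2 \<le> (\<Sum>d. G d (nat \<lfloor>r\<rfloor>) r)"
        using kappa_add_kappa_d_minus_2_le[OF True hr] mem_unit_cell_floor[of r] True
        by (simp add: G_def mult.commute)
      also have "\<dots> \<le> (\<Sum>d. \<Sum>n. G d n r)"
        by (intro suminf_le summableI sum_le_suminf[of _ "{nat \<lfloor>r\<rfloor>}", simplified]) auto
      finally show ?thesis using True by simp
    qed simp
  qed
  also have "\<dots> = (\<Sum>d. \<Sum>n. ennreal (exp (1 - real d))
      * (\<integral>\<^sup>+r\<in>unit_cell n. ennreal (cell_mean_inv h (n + d) * h r + cell_mean h (n + d) / h r - 2) \<partial>lborel))"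
    unfolding G_def by (subst nn_integral_suminf, measurable)+ (simp add: nn_integral_cmult)
  also have "\<dots> = (\<Sum>d. \<Sum>n. ennreal (exp (1 - real d) * osc n (n + d)))"
  proof -
    have "(\<integral>\<^sup>+r\<in>unit_cell n. ennreal (cell_mean_inv h m * h r + cell_mean h m / h r - 2) \<partial>lborel)
        = ennreal (osc n m)" for n m
      using cell_mean_pos[of m] cell_mean_inv_pos[of m] one_le_cell_mean_mult[of m]
      by (subst set_nn_integral_cell_affine) (auto simp: osc_def algebra_simps)
    thus ?thesis by (simp add: ennreal_mult')
  qed
  finally show ?thesis .
qed

lemma h_int_le_nondegenerate:
  "h_int h \<le> ennreal (600 * enn2real (A2l1 h) * exp (4 * enn2real (A2l1 h)))"
proof -
  have "enn2real (A2l1 h) = suminf eps"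
    using summable_eps eps_nonneg
    by (simp add: A2l1_eq_suminf_eps suminf_ennreal2 suminf_nonneg)
  thus ?thesis
    using h_int_le_weighted_osc weighted_osc_suminf_le[OF summable_eps] by simp
qed

end

lemma (in A2_weight) h_int_le:
  "h_int h \<le> ennreal (600 * enn2real (A2l1 h) * exp (4 * enn2real (A2l1 h)))"
proof (cases "cell_int_inv h 0 = \<infinity>")
  case True
  thus ?thesis by (simp add: h_int_eq_0_if_degenerate)
next
  case False
  then interpret nondegenerate_A2_weight h by unfold_locales
  show ?thesis by (rule h_int_le_nondegenerate)
qed

lemma A2l1_cong:
  assumes "\<And>x. 0 \<le> x \<Longrightarrow> g x = h x"
  shows "A2l1 g = A2l1 h"
proof -
  have "avg (Ivl (real n) 2) (\<lambda>x. f (g x)) = avg (Ivl (real n) 2) (\<lambda>x. f (h x))"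
    for n and f :: "real \<Rightarrow> ennreal"
    unfolding avg_def using assms by (intro arg_cong2[where f="(/)"] nn_integral_cong refl)
      (auto simp: Ivl_def indicator_def)
  from this[of _ ennreal] this[of _ "\<lambda>t. inverse (ennreal t)"] show ?thesis
    unfolding A2l1_def by simp
qed

lemma h_int_cong:
  assumes "\<And>x. 0 \<le> x \<Longrightarrow> g x = h x"
  shows "h_int g = h_int h"
proof -
  have "kappa g r = kappa h r" "kappa_d g r = kappa_d h r" if "0 < r" for r
  proof -
    have "(\<integral>\<^sup>+s\<in>{r..}. f (g s) s \<partial>lborel) = (\<integral>\<^sup>+s\<in>{r..}. f (h s) s \<partial>lborel)"
      for f :: "real \<Rightarrow> real \<Rightarrow> ennreal"
      using that assms by (intro nn_integral_cong) (auto simp: indicator_def)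
    from this[of "\<lambda>t s. ennreal (t * exp (r - s))"]
      this[of "\<lambda>t s. inverse (ennreal t) * ennreal (exp (r - s))"]
    show "kappa g r = kappa h r" "kappa_d g r = kappa_d h r"
      using that assms by (simp_all add: kappa_def kappa_d_def)
  qed
  thus ?thesis unfolding h_int_def by (intro nn_integral_cong) (auto simp: indicator_def)
qed

theorem proposition4p2:
  "\<exists>c::real. \<forall>h::real \<Rightarrow> real.
     set_borel_measurable lborel {0..} h \<and> (\<forall>x\<ge>0. 0 \<le> h x) \<and> A2l1 h < \<infinity> \<longrightarrow>
     h_int h \<le> ennreal (c * enn2real (A2l1 h) * exp (c * enn2real (A2l1 h)))"
proof (intro exI[of _ 600] allI impI)
  fix h :: "real \<Rightarrow> real"
  assume h: "set_borel_measurable lborel {0..} h \<and> (\<forall>x\<ge>0. 0 \<le> h x) \<and> A2l1 h < \<infinity>"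
  define g where "g x = indicator {0..} x * h x" for x
  have g_eq: "g x = h x" if "0 \<le> x" for x using that by (simp add: g_def)
  interpret A2_weight g
  proof
    show "g \<in> borel_measurable borel"
      using h unfolding g_def by (simp add: set_borel_measurable_def)
    show "0 \<le> g x" for x using h by (simp add: g_def indicator_def)
    show "A2l1 g < \<infinity>" using h by (simp add: A2l1_cong[OF g_eq])
  qed
  have "h_int g \<le> ennreal (600 * enn2real (A2l1 g) * exp (4 * enn2real (A2l1 g)))"
    by (rule h_int_le)
  also have "\<dots> \<le> ennreal (600 * enn2real (A2l1 g) * exp (600 * enn2real (A2l1 g)))"
    by (intro ennreal_leI mult_left_mono) auto
  finally show "h_int h \<le> ennreal (600 * enn2real (A2l1 h) * exp (600 * enn2real (A2l1 h)))"
    by (simp add: A2l1_cong[OF g_eq] h_int_cong[OF g_eq])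
qed

end
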